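(* Let $k_2,h,\alpha,l,L,k>0$ with $L>l$. Then the equation $$-\frac{k_2}{h}\,x=\frac{\tan(\alpha l x)+k\alpha\tan((L-l)x)}{k\alpha-\tan(\alpha l x)\tan((L-l)x)},\qquad x>0,$$ has infinitely many positive solutions $0<x_1<x_2<\cdots<x_n<\cdots$.
   Context: This is the eigenvalue equation arising from separation of variables for heat conduction in a two-material bar $[0,L]$ with interface at $x=l$, Dirichlet condition at $x=0$ and convective (Robin) condition with coefficient $h$ at $x=L$; here $k=k_1/k_2$ is the ratio of the thermal conductivities and $\alpha=\alpha_2/\alpha_1$ the ratio of the square roots of the thermal diffusivities of the two materials. Solutions are understood as points $x>0$ where the right-hand side is defined and equals the left-hand side. *)

theory Defs
  imports "HOL-Analysis.Analysis"
begin

definition eig_rhs :: "real \<Rightarrow> real \<Rightarrow> real \<Rightarrow> real \<Rightarrow> real \<Rightarrow> real" where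
  "eig_rhs \<alpha> l L k x =
     (tan (\<alpha> * l * x) + k * \<alpha> * tan ((L - l) * x)) /
     (k * \<alpha> - tan (\<alpha> * l * x) * tan ((L - l) * x))"

definition is_eig_solution :: "real \<Rightarrow> real \<Rightarrow> real \<Rightarrow> real \<Rightarrow> real \<Rightarrow> real \<Rightarrow> real \<Rightarrow> bool" where
  "is_eig_solution k2 h \<alpha> l L k x \<longleftrightarrow>
     x > 0 \<and> cos (\<alpha> * l * x) \<noteq> 0 \<and> cos ((L - l) * x) \<noteq> 0 \<and>
     k * \<alpha> - tan (\<alpha> * l * x) * tan ((L - l) * x) \<noteq> 0 \<and>
     - (k2 / h) * x = eig_rhs \<alpha> l L k x"

end

theory Submission
  imports Defs
begin

(* With A = alpha l, B = L - l, K = k alpha and c = k2 / h, clearing the cosines turns the equation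
   into sin (A x) cos (B x) + K cos (A x) sin (B x) + c x (K cos (A x) cos (B x) - sin (A x) sin (B x)) = 0,
   and every root at which both cosines are nonzero is a solution.
   If A = B, the left-hand side is c K x > 0 where sin (A x) = 0 and - c x < 0 where cos (A x) = 0,
   so the intermediate value theorem gives arbitrarily large roots.
   Otherwise let a > b be the two frequencies; the equation reads cos (a x) M x = sin (a x) R x with
   M, R combinations of x cos (b x), x sin (b x), sin (b x), cos (b x). On a window where b x runs
   through [2 j pi + delta, 2 j pi + pi] the term R is positive, so the roots with cos (a x) nonzero are
   the points where the phase a x - arctan (M x / R x) lies in pi Z. Since a > b, for small delta and
   large j this phase grows by more than 2 pi across the window, which yields two roots; at most one of
   them is the unique zero of cos (b x) in the window. *)

lemma cross_eq_if_phase_in_pi_Ints: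
  fixes \<theta> M R :: real and m :: int
  assumes "R \<noteq> 0" "\<theta> - arctan (M / R) = of_int m * pi"
  shows "cos \<theta> * M = sin \<theta> * R" and "cos \<theta> \<noteq> 0"
proof -
  define T where "T = arctan (M / R)"
  have "sin (of_int m * pi) = 0"
    by (simp add: sin_times_pi_eq_0)
  then have "cos (of_int m * pi) \<noteq> 0"
    using sin_cos_squared_add[of "of_int m * pi"] by auto
  moreover have "\<theta> = of_int m * pi + T"
    using assms(2) by (simp add: T_def)
  then have "cos \<theta> = cos (of_int m * pi) * cos T" "sin \<theta> = cos (of_int m * pi) * sin T"
    using \<open>sin (of_int m * pi) = 0\<close> by (simp_all add: cos_add sin_add)
  moreover have "cos T \<noteq> 0"
    by (simp add: T_def cos_arctan_not_zero)
  moreover from this have "sin T = cos T * (M / R)"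
    using tan_arctan[of "M / R"] by (simp add: T_def tan_def field_simps)
  ultimately show "cos \<theta> * M = sin \<theta> * R" and "cos \<theta> \<noteq> 0"
    using assms(1) by (simp_all add: field_simps)
qed

lemma arctan_ge_pi_half_minus_inverse:
  fixes y :: real
  assumes "0 < y"
  shows "pi / 2 - 1 / y \<le> arctan y"
proof -
  have "arctan (inverse y) \<le> inverse y"
    using assms by (intro arctan_le_self) simp
  with arctan_inverse[OF assms] show ?thesis
    by (simp add: field_simps)
qed

lemma exists_pi_multiples_consecutive:
  fixes \<Psi> :: "real \<Rightarrow> real"
  assumes "s \<le> e" "continuous_on {s..e} \<Psi>" "\<Psi> s + 2 * pi \<le> \<Psi> e"
  obtains m x1 x2 where "x1 \<in> {s..e}" "x2 \<in> {s..e}"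
    "\<Psi> x1 = of_int m * pi" "\<Psi> x2 = of_int (m + 1) * pi"
proof -
  define m where "m = \<lceil>\<Psi> s / pi\<rceil>"
  have "\<Psi> s / pi \<le> of_int m" "of_int m < \<Psi> s / pi + 1"
    using ceiling_correct[of "\<Psi> s / pi"] by (simp_all add: m_def)
  then have bounds: "\<Psi> s \<le> of_int m * pi" "of_int m * pi \<le> of_int (m + 1) * pi"
    "of_int (m + 1) * pi \<le> \<Psi> e"
    using pi_gt_zero assms(3) by (simp_all add: field_simps)
  have "\<exists>x\<in>{s..e}. \<Psi> x = of_int i * pi" if "i \<in> {m, m + 1}" for i
  proof -
    have "\<Psi> s \<le> of_int i * pi" "of_int i * pi \<le> \<Psi> e"
      using that bounds order_trans[OF bounds(1,2)] order_trans[OF bounds(2,3)] by auto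
    then show ?thesis
      using IVT'[of \<Psi> s "of_int i * pi" e] assms(1,2) by force
  qed
  then show ?thesis
    using that by blast
qed

lemma two_cross_roots_if_phase_gap:
  fixes M R :: "real \<Rightarrow> real" and a s e :: real
  assumes "s \<le> e" "continuous_on {s..e} M" "continuous_on {s..e} R" "\<And>t. t \<in> {s..e} \<Longrightarrow> R t \<noteq> 0"
    and gap: "2 * pi \<le> a * (e - s) - arctan (M e / R e) + arctan (M s / R s)"
  obtains x1 x2 where "x1 \<in> {s..e}" "x2 \<in> {s..e}" "x1 \<noteq> x2"
    "cos (a * x1) * M x1 = sin (a * x1) * R x1" "cos (a * x1) \<noteq> 0"
    "cos (a * x2) * M x2 = sin (a * x2) * R x2" "cos (a * x2) \<noteq> 0"
proof -
  define \<Psi> where "\<Psi> t = a * t - arctan (M t / R t)" for t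
  have "continuous_on {s..e} \<Psi>"
    unfolding \<Psi>_def using assms(2-4) by (intro continuous_intros) auto
  moreover have "\<Psi> s + 2 * pi \<le> \<Psi> e"
    using gap by (simp add: \<Psi>_def right_diff_distrib)
  ultimately obtain m x1 x2 where x: "x1 \<in> {s..e}" "x2 \<in> {s..e}"
    "\<Psi> x1 = of_int m * pi" "\<Psi> x2 = of_int (m + 1) * pi"
    using exists_pi_multiples_consecutive assms(1) by blast
  then have "x1 \<noteq> x2"
    by (auto simp: algebra_simps)
  with x show ?thesis
    using that cross_eq_if_phase_in_pi_Ints[OF assms(4), of x1 "a * x1" "M x1" m]
      cross_eq_if_phase_in_pi_Ints[OF assms(4), of x2 "a * x2" "M x2" "m + 1"]
    by (simp add: \<Psi>_def)
qed

lemmas sin_cos_plus_2pi_multiple =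
  sin.plus_of_nat[where 'a=real, simplified] cos.plus_of_nat[where 'a=real, simplified]

lemma cos_inj_shifted_pi:
  fixes x y :: real and j :: nat
  assumes "x \<in> {real j * (2 * pi)..pi + real j * (2 * pi)}" "y \<in> {real j * (2 * pi)..pi + real j * (2 * pi)}"
    and "cos x = cos y"
  shows "x = y"
proof -
  have "cos (x - real j * (2 * pi)) = cos (y - real j * (2 * pi))"
    by (metis assms(3) diff_add_cancel sin_cos_plus_2pi_multiple(2))
  then have "x - real j * (2 * pi) = y - real j * (2 * pi)"
    using cos_inj_pi[of "x - real j * (2 * pi)" "y - real j * (2 * pi)"] assms(1,2) by auto
  then show ?thesis
    by simp
qed

lemma sin_cos_combination_pos:
  fixes Q q \<delta> y :: real
  assumes "0 < \<delta>" "\<delta> \<le> pi / 2" "\<delta> \<le> y" "y \<le> pi" "0 < q" "q < Q * sin \<delta>"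
  shows "0 < Q * sin y - q * cos y"
proof -
  have "0 < sin \<delta>"
    using assms(1,2) by (intro sin_gt_zero) auto
  moreover have "0 < Q * sin \<delta>"
    using assms(5,6) by linarith
  ultimately have "0 < Q"
    by (simp add: zero_less_mult_iff)
  show ?thesis
  proof (cases "y \<le> pi / 2")
    case True
    have "sin \<delta> \<le> sin y"
      using assms(1,3) True by (intro sin_monotone_2pi_le) auto
    then have "Q * sin \<delta> \<le> Q * sin y"
      using \<open>0 < Q\<close> by simp
    moreover have "q * cos y \<le> q"
      using assms(5) by (simp add: mult_left_le)
    ultimately show ?thesis
      using assms(6) by linarith
  next
    case False
    then have "cos y < 0"
      using assms(4) by (intro cos_lt_zero_pi) auto
    moreover have "0 \<le> sin y"
      using assms(1,3,4) by (intro sin_ge_zero) auto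
    ultimately show ?thesis
      using assms(5) \<open>0 < Q\<close> mult_pos_neg[of q "cos y"] mult_nonneg_nonneg[of Q "sin y"]
      by linarith
  qed
qed

lemma cross_denominator_pos_on_window:
  fixes q1 q2 \<delta> t :: real and j :: nat
  assumes "0 < \<delta>" "\<delta> \<le> pi / 2" "0 < q1" "0 < q2" "q2 / (q1 * sin \<delta>) < t"
    and "t \<in> {\<delta> + real j * (2 * pi)..pi + real j * (2 * pi)}"
  shows "0 < q1 * t * sin t - q2 * cos t"
proof -
  have "0 < sin \<delta>"
    using assms(1,2) by (intro sin_gt_zero) auto
  then have "q2 < q1 * t * sin \<delta>"
    using assms(3,5) by (simp add: divide_less_eq mult_ac)
  then have "0 < q1 * t * sin (t - real j * (2 * pi)) - q2 * cos (t - real j * (2 * pi))"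
    using assms(1,2,4,6) by (intro sin_cos_combination_pos[of \<delta>]) auto
  then show ?thesis
    by (metis diff_add_cancel sin_cos_plus_2pi_multiple)
qed

lemma arctan_window_start_ge:
  fixes \<tau> p1 p2 q1 q2 s :: real
  defines "\<delta> \<equiv> arctan \<tau>"
  assumes "0 < \<tau>" "0 < p1" "0 \<le> p2" "0 < q1" "0 \<le> q2" "0 < s"
    and R: "0 < q1 * s * sin \<delta> - q2 * cos \<delta>"
  shows "pi / 2 - q1 * \<tau> / p1
    \<le> arctan ((p1 * s * cos \<delta> + p2 * sin \<delta>) / (q1 * s * sin \<delta> - q2 * cos \<delta>))"
proof -
  have \<delta>: "0 < \<delta>" "\<delta> < pi / 2"
    using assms(2) arctan_ubound by (simp_all add: \<delta>_def zero_less_arctan_iff)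
  have "0 < cos \<delta>" "0 < sin \<delta>"
    by (intro cos_gt_zero_pi sin_gt_zero; use \<delta> pi_gt_zero in linarith)+
  have "sin \<delta> = \<tau> * cos \<delta>"
    using tan_arctan[of \<tau>] \<open>0 < cos \<delta>\<close> by (simp add: \<delta>_def tan_def field_simps)
  have "p1 / (q1 * \<tau>) = (p1 * s * cos \<delta>) / (q1 * s * sin \<delta>)"
    using \<open>0 < cos \<delta>\<close> assms(7) by (simp add: \<open>sin \<delta> = \<tau> * cos \<delta>\<close>)
  also have "\<dots> \<le> (p1 * s * cos \<delta> + p2 * sin \<delta>) / (q1 * s * sin \<delta> - q2 * cos \<delta>)"
    using assms(3-7) R \<open>0 < cos \<delta>\<close> \<open>0 < sin \<delta>\<close> by (intro frac_le) auto
  finally have "arctan (p1 / (q1 * \<tau>)) \<le> arctan ((p1 * s * cos \<delta> + p2 * sin \<delta>) / (q1 * s * sin \<delta> - q2 * cos \<delta>))"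
    by (simp add: arctan_le_iff)
  moreover have "pi / 2 - q1 * \<tau> / p1 \<le> arctan (p1 / (q1 * \<tau>))"
    using arctan_ge_pi_half_minus_inverse[of "p1 / (q1 * \<tau>)"] assms(2,3,5) by simp
  ultimately show ?thesis
    by linarith
qed

lemma phase_gap_on_window:
  fixes r p1 p2 q1 q2 \<tau> :: real and j :: nat
  defines "M \<equiv> \<lambda>t. p1 * t * cos t + p2 * sin t" and "R \<equiv> \<lambda>t. q1 * t * sin t - q2 * cos t"
    and "t0 \<equiv> arctan \<tau> + real j * (2 * pi)" and "t1 \<equiv> pi + real j * (2 * pi)"
  assumes r: "1 < r" and p: "0 < p1" "0 \<le> p2" and q: "0 < q1" "0 < q2"
    and \<tau>: "2 * (r + q1 / p1) * \<tau> = (r - 1) * pi"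
    and R_t0: "0 < R t0" and t1_large: "2 * q2 / (p1 * ((r - 1) * pi)) < t1"
  shows "2 * pi \<le> r * (t1 - t0) - arctan (M t1 / R t1) + arctan (M t0 / R t0)"
proof -
  define g where "g = (r - 1) * pi"
  define \<delta> \<epsilon> \<kappa> where "\<delta> = arctan \<tau>" and "\<epsilon> = q2 / (p1 * t1)" and "\<kappa> = q1 * \<tau> / p1"
  define \<phi>0 \<phi>1 where "\<phi>0 = arctan (M t0 / R t0)" and "\<phi>1 = arctan (M t1 / R t1)"
  have "0 < g" "0 < r + q1 / p1"
    using r p q by (simp_all add: g_def add_pos_pos)
  moreover have "0 < 2 * (r + q1 / p1) * \<tau>"
    using \<tau> \<open>0 < g\<close> by (simp add: g_def)
  ultimately have "0 < \<tau>"
    by (simp add: zero_less_mult_iff)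
  then have "0 < t0"
    by (simp add: t0_def zero_less_arctan_iff add_pos_nonneg)
  have "arctan \<tau> \<le> pi"
    using arctan_ubound[of \<tau>] pi_gt_zero by linarith
  then have "t0 \<le> t1"
    by (simp add: t0_def t1_def)
  then have "2 * \<epsilon> < g"
    using p q t1_large \<open>0 < t0\<close> \<open>0 < g\<close> by (simp add: g_def \<epsilon>_def field_simps)
  moreover have "pi \<le> 2 * \<epsilon> - 2 * \<phi>1"
    using arctan_ge_pi_half_minus_inverse[of "p1 * t1 / q2"] p q \<open>0 < t0\<close> \<open>t0 \<le> t1\<close>
    by (simp add: \<phi>1_def \<epsilon>_def M_def R_def t1_def arctan_minus sin_cos_plus_2pi_multiple)
  moreover have "pi \<le> 2 * \<phi>0 + 2 * \<kappa>"
    using arctan_window_start_ge[of \<tau> p1 p2 q1 q2 t0] p q R_t0 \<open>0 < t0\<close> \<open>0 < \<tau>\<close>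
    by (simp add: \<phi>0_def M_def R_def t0_def \<kappa>_def sin_cos_plus_2pi_multiple)
  moreover have "2 * (r * \<delta> + \<kappa>) \<le> g"
  proof -
    have "2 * (r * \<delta> + \<kappa>) \<le> 2 * (r * \<tau> + \<kappa>)"
      using arctan_le_self[of \<tau>] \<open>0 < \<tau>\<close> r by (simp add: \<delta>_def)
    also have "\<dots> = 2 * (r + q1 / p1) * \<tau>"
      by (simp add: \<kappa>_def algebra_simps)
    finally show ?thesis
      using \<tau> by (simp add: g_def)
  qed
  moreover have "r * (t1 - t0) = g + pi - r * \<delta>"
    by (simp add: g_def t0_def t1_def \<delta>_def algebra_simps)
  ultimately show ?thesis
    unfolding \<phi>0_def[symmetric] \<phi>1_def[symmetric] by argo
qed

lemma exists_large_cross_root_ratio_gt_1: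
  fixes r p1 p2 q1 q2 X :: real
  assumes "1 < r" "0 < p1" "0 \<le> p2" "0 < q1" "0 < q2"
  shows "\<exists>t>X. cos (r * t) * (p1 * t * cos t + p2 * sin t) = sin (r * t) * (q1 * t * sin t - q2 * cos t)
    \<and> cos (r * t) \<noteq> 0 \<and> cos t \<noteq> 0"
proof -
  define M where "M t = p1 * t * cos t + p2 * sin t" for t
  define R where "R t = q1 * t * sin t - q2 * cos t" for t
  (* tan delta = tau, and the phase lost at the left end of the window, at most (r + q1 / p1) tau,
     is then half of the excess (r - 1) pi of the window over pi *)
  define \<tau> where "\<tau> = (r - 1) * pi / (2 * (r + q1 / p1))"
  define \<delta> where "\<delta> = arctan \<tau>"
  have "0 < r + q1 / p1"
    using assms by (simp add: add_pos_pos)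
  then have "2 * (r + q1 / p1) * \<tau> = (r - 1) * pi" "0 < \<tau>"
    using assms(1) by (simp_all add: \<tau>_def)
  then have \<delta>: "0 < \<delta>" "\<delta> < pi / 2"
    using arctan_ubound by (simp_all add: \<delta>_def zero_less_arctan_iff)
  define T where "T = max X (max (q2 / (q1 * sin \<delta>)) (2 * q2 / (p1 * ((r - 1) * pi))))"
  obtain j :: nat where j: "T < real j * (2 * pi)"
    using ex_less_of_nat_mult[of "2 * pi" T] by auto
  define t0 t1 where "t0 = \<delta> + real j * (2 * pi)" and "t1 = pi + real j * (2 * pi)"
  have "T < t0" "t0 \<le> t1"
    using j \<delta> by (simp_all add: t0_def t1_def)
  have R_pos: "0 < R t" if "t \<in> {t0..t1}" for t
    using cross_denominator_pos_on_window[of \<delta> q1 q2 t j] that \<delta> assms(4,5) \<open>T < t0\<close>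
    by (simp add: R_def T_def t0_def t1_def)
  have gap: "2 * pi \<le> r * (t1 - t0) - arctan (M t1 / R t1) + arctan (M t0 / R t0)"
    using phase_gap_on_window[of r p1 p2 q1 q2 \<tau> j] assms
      \<open>2 * (r + q1 / p1) * \<tau> = (r - 1) * pi\<close> R_pos[of t0] \<open>T < t0\<close> \<open>t0 \<le> t1\<close>
    unfolding M_def R_def t0_def t1_def \<delta>_def T_def by auto
  have "continuous_on {t0..t1} M" "continuous_on {t0..t1} R"
    unfolding M_def R_def by (intro continuous_intros)+
  moreover have "\<And>t. t \<in> {t0..t1} \<Longrightarrow> R t \<noteq> 0"
    using R_pos by (metis less_irrefl)
  ultimately obtain x1 x2 where x: "x1 \<in> {t0..t1}" "x2 \<in> {t0..t1}" "x1 \<noteq> x2"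
    "cos (r * x1) * M x1 = sin (r * x1) * R x1" "cos (r * x1) \<noteq> 0"
    "cos (r * x2) * M x2 = sin (r * x2) * R x2" "cos (r * x2) \<noteq> 0"
    by (rule two_cross_roots_if_phase_gap[OF \<open>t0 \<le> t1\<close> _ _ _ gap])
  have "\<exists>t\<in>{x1, x2}. cos t \<noteq> 0"
    using cos_inj_shifted_pi[of x1 j x2] x(1-3) \<delta> by (force simp: t0_def t1_def)
  then obtain t where t: "t \<in> {x1, x2}" "cos t \<noteq> 0"
    by blast
  then have "X < t" "cos (r * t) * M t = sin (r * t) * R t" "cos (r * t) \<noteq> 0"
    using x \<open>T < t0\<close> by (auto simp: T_def)
  then show ?thesis
    using t(2) by (intro exI[of _ t]) (simp add: M_def R_def)
qed

lemma exists_large_cross_root: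
  fixes a b p1 p2 q1 q2 X :: real
  assumes "0 < b" "b < a" "0 < p1" "0 \<le> p2" "0 < q1" "0 < q2"
  shows "\<exists>x>X. cos (a * x) * (p1 * x * cos (b * x) + p2 * sin (b * x))
      = sin (a * x) * (q1 * x * sin (b * x) - q2 * cos (b * x))
    \<and> cos (a * x) \<noteq> 0 \<and> cos (b * x) \<noteq> 0"
proof -
  obtain t where "b * X < t" and t:
    "cos (a / b * t) * (p1 / b * t * cos t + p2 * sin t) = sin (a / b * t) * (q1 / b * t * sin t - q2 * cos t)"
    "cos (a / b * t) \<noteq> 0" "cos t \<noteq> 0"
    using exists_large_cross_root_ratio_gt_1[of "a / b" "p1 / b" p2 "q1 / b" q2 "b * X"] assms by auto
  define x where "x = t / b"
  have "t = b * x"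
    using assms(1) by (simp add: x_def)
  then have "a / b * t = a * x" "p1 / b * t = p1 * x" "q1 / b * t = q1 * x"
    "cos t = cos (b * x)" "sin t = sin (b * x)"
    using assms(1) by simp_all
  moreover have "X < x"
    using \<open>b * X < t\<close> \<open>t = b * x\<close> assms(1) by simp
  ultimately show ?thesis
    using t by (intro exI[of _ x]) simp
qed

lemma exists_large_cleared_root_equal_freq:
  fixes A K c X :: real
  assumes "0 < A" "0 < K" "0 < c"
  shows "\<exists>x>X. cos (A * x) \<noteq> 0 \<and> sin (A * x) * cos (A * x) + K * cos (A * x) * sin (A * x)
    + c * x * (K * cos (A * x) * cos (A * x) - sin (A * x) * sin (A * x)) = 0"
proof -
  define F where "F x = sin (A * x) * cos (A * x) + K * cos (A * x) * sin (A * x)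
    + c * x * (K * cos (A * x) * cos (A * x) - sin (A * x) * sin (A * x))" for x
  have F_at_cos_0: "F x = - c * x" if "cos (A * x) = 0" for x
    using that sin_cos_squared_add[of "A * x"] by (simp add: F_def power2_eq_square)
  obtain n :: nat where n: "max X 0 < real n * (pi / A)"
    using ex_less_of_nat_mult[of "pi / A" "max X 0"] assms(1) by auto
  define x0 x1 where "x0 = real n * (pi / A)" and "x1 = x0 + pi / (2 * A)"
  have "0 < x0" "x0 \<le> x1"
    using n assms(1) by (simp_all add: x0_def x1_def)
  have "sin (A * x0) = 0"
    using assms(1) by (simp add: x0_def sin_npi)
  then have "F x0 = c * x0 * K"
    using sin_cos_squared_add[of "A * x0"] by (simp add: F_def power2_eq_square)
  moreover have "cos (A * x1) = 0"
    using assms(1) by (simp add: x1_def x0_def distrib_left cos_add sin_npi)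
  ultimately have "F x1 \<le> 0" "0 \<le> F x0"
    using F_at_cos_0 \<open>0 < x0\<close> \<open>x0 \<le> x1\<close> assms by simp_all
  moreover have "continuous_on {x0..x1} F"
    unfolding F_def by (intro continuous_intros)
  ultimately obtain x where x: "x0 \<le> x" "x \<le> x1" "F x = 0"
    using IVT2'[of F x1 0 x0] \<open>x0 \<le> x1\<close> by auto
  then have "cos (A * x) \<noteq> 0"
    using F_at_cos_0 \<open>0 < x0\<close> assms(3) by force
  moreover have "X < x"
    using n x(1) by (simp add: x0_def)
  ultimately show ?thesis
    using x(3) by (auto simp: F_def)
qed

lemma exists_large_cleared_root:
  fixes A B K c X :: real
  assumes "0 < A" "0 < B" "0 < K" "0 < c"
  shows "\<exists>x>X. cos (A * x) \<noteq> 0 \<and> cos (B * x) \<noteq> 0 \<and> sin (A * x) * cos (B * x) + K * cos (A * x) * sin (B * x)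
    + c * x * (K * cos (A * x) * cos (B * x) - sin (A * x) * sin (B * x)) = 0"
proof (cases B A rule: linorder_cases)
  case less
  then show ?thesis
    using exists_large_cross_root[of B A "K * c" K c 1 X] assms
    by (auto simp: algebra_simps)
next
  case equal
  then show ?thesis
    using exists_large_cleared_root_equal_freq[of A K c X] assms by simp
next
  case greater
  then show ?thesis
    using exists_large_cross_root[of A B "K * c" 1 c K X] assms
    by (auto simp: algebra_simps)
qed

lemma tan_ratio_eq_if_cleared:
  fixes a b K \<mu> :: real
  assumes "K > 0" "cos a \<noteq> 0" "cos b \<noteq> 0"
    and cleared: "sin a * cos b + K * cos a * sin b + \<mu> * (K * cos a * cos b - sin a * sin b) = 0"
  shows "K - tan a * tan b \<noteq> 0" and "(tan a + K * tan b) / (K - tan a * tan b) = - \<mu>"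
proof -
  define N where "N = sin a * cos b + K * cos a * sin b"
  define D where "D = K * cos a * cos b - sin a * sin b"
  have "N\<^sup>2 + D\<^sup>2 = ((K * cos a)\<^sup>2 + (sin a)\<^sup>2) * ((cos b)\<^sup>2 + (sin b)\<^sup>2)"
    unfolding N_def D_def by algebra
  also have "\<dots> > 0"
    using assms(1,2) by (simp add: add_pos_nonneg)
  moreover have "N = - \<mu> * D"
    using cleared by (simp add: N_def D_def algebra_simps)
  ultimately have "D \<noteq> 0"
    by auto
  have num: "tan a + K * tan b = N / (cos a * cos b)"
    and den: "K - tan a * tan b = D / (cos a * cos b)"
    using assms(2,3) by (simp_all add: tan_def N_def D_def field_simps)
  show "K - tan a * tan b \<noteq> 0"
    using \<open>D \<noteq> 0\<close> assms(2,3) by (simp add: den)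
  show "(tan a + K * tan b) / (K - tan a * tan b) = - \<mu>"
    using \<open>D \<noteq> 0\<close> \<open>N = - \<mu> * D\<close> assms(2,3) by (simp add: num den)
qed

lemma strict_mono_seq_if_unbounded:
  fixes P :: "real \<Rightarrow> bool"
  assumes "\<And>X. \<exists>x>X. P x"
  shows "\<exists>f :: nat \<Rightarrow> real. strict_mono f \<and> (\<forall>n. P (f n))"
proof -
  obtain f :: "nat \<Rightarrow> real" where "\<forall>n. P (f n) \<and> f n < f (Suc n)"
    using dependent_nat_choice[of "\<lambda>_. P" "\<lambda>_ x y. x < y"] assms by blast
  then show ?thesis by (auto intro: strict_monoI_Suc)
qed

theorem theorem1:
  fixes k2 h \<alpha> l L k :: real
  assumes "k2 > 0" "h > 0" "\<alpha> > 0" "l > 0" "L > 0" "k > 0" "L > l"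
  shows "\<exists>x :: nat \<Rightarrow> real. strict_mono x \<and> (\<forall>n. is_eig_solution k2 h \<alpha> l L k (x n))"
proof (rule strict_mono_seq_if_unbounded)
  fix X :: real
  obtain x where "max X 0 < x" and x: "cos (\<alpha> * l * x) \<noteq> 0" "cos ((L - l) * x) \<noteq> 0"
    "sin (\<alpha> * l * x) * cos ((L - l) * x) + k * \<alpha> * cos (\<alpha> * l * x) * sin ((L - l) * x)
      + k2 / h * x * (k * \<alpha> * cos (\<alpha> * l * x) * cos ((L - l) * x) - sin (\<alpha> * l * x) * sin ((L - l) * x)) = 0"
    using exists_large_cleared_root[of "\<alpha> * l" "L - l" "k * \<alpha>" "k2 / h" "max X 0"] assms by auto
  have "is_eig_solution k2 h \<alpha> l L k x"
    using tan_ratio_eq_if_cleared[OF _ x] x(1,2) \<open>max X 0 < x\<close> assms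
    by (simp add: is_eig_solution_def eig_rhs_def)
  then show "\<exists>x>X. is_eig_solution k2 h \<alpha> l L k x"
    using \<open>max X 0 < x\<close> by auto
qed

end
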